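(* Let $G=(V,E)$ be an undirected graph with $n=|V|$ nodes and let $f$ be an integer with $0<f<n$. If there exists an algorithm that solves $\epsilon$-approximate Byzantine consensus on $G$ in the asynchronous local broadcast model tolerating at most $f$ Byzantine faulty nodes, then $n \ge 3f+1$.
   Context: Communication network: an undirected graph $G=(V,E)$ known to every node; each edge is a reliable FIFO link, and a receiver knows the identity of the sender of each message. Local broadcast model: every message sent by a node $u$ is received identically and correctly by all neighbors of $u$ (so a node cannot send different messages to different neighbors). Asynchrony: nodes proceed at arbitrary speeds with no global clock, and every message is delivered after an unbounded but finite delay. At most $f$ nodes are Byzantine faulty and may behave arbitrarily, subject to the local broadcast constraint (in particular a faulty node may crash, i.e. take no steps). $\epsilon$-approximate Byzantine consensus: there are known reals $L<U$ and $\epsilon$ with $U-L>\epsilon>0$; each node starts with a real input in $[L,U]$ and must output a real value such that (1) $\epsilon$-Agreement: the outputs of any two non-faulty nodes differ by at most $\epsilon$; (2) Validity: each non-faulty node's output lies in the convex hull of the inputs of the non-faulty nodes; (3) Termination: every non-faulty node decides its output within finite time (which may depend on $U$, $L$, $\epsilon$). Once a node terminates it takes no further steps. *)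

theory Defs
  imports "HOL-Analysis.Analysis"
begin

text \<open>A deterministic distributed algorithm, parametrised by node identity.
  alg_init v x  : initial local state of node v with input x, and the messages
                  it broadcasts initially;
  alg_step v s u m : node v in state s receives message m from neighbour u and
                  moves to a new state, broadcasting a list of messages;
  alg_out s     : the output of a node in state s (None = not yet decided).
  A node whose output is Some y has decided y and terminated: it takes no
  further steps.\<close>

record ('v, 's, 'm) alg =
  alg_init :: "'v \<Rightarrow> real \<Rightarrow> 's \<times> 'm list"
  alg_step :: "'v \<Rightarrow> 's \<Rightarrow> 'v \<Rightarrow> 'm \<Rightarrow> 's \<times> 'm list"
  alg_out  :: "'s \<Rightarrow> real option"

text \<open>Configuration: local states of the nodes and, for each directed edge
  (u,w), the FIFO queue of messages sent by u not yet delivered to w.\<close>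

type_synonym ('v, 's, 'm) config = "('v \<Rightarrow> 's) \<times> ('v \<times> 'v \<Rightarrow> 'm list)"

datatype ('v, 'm) event = Deliver 'v 'v | Byz 'v 'm | Idle

text \<open>Local broadcast: node u appends the messages ms to the queues of all
  its outgoing edges (all neighbours receive identically).\<close>

definition bcast :: "('v \<times> 'v) set \<Rightarrow> 'v \<Rightarrow> 'm list \<Rightarrow> ('v \<times> 'v \<Rightarrow> 'm list) \<Rightarrow> ('v \<times> 'v \<Rightarrow> 'm list)" where
  "bcast E u ms Q = (\<lambda>e. if fst e = u \<and> e \<in> E then Q e @ ms else Q e)"

definition enabled :: "('v, 's, 'm) alg \<Rightarrow> ('v \<times> 'v) set \<Rightarrow> 'v set \<Rightarrow> ('v, 's, 'm) config \<Rightarrow> 'v \<Rightarrow> 'v \<Rightarrow> bool" where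
  "enabled A E F c u w \<longleftrightarrow>
     w \<notin> F \<and> (u, w) \<in> E \<and> alg_out A (fst c w) = None \<and> snd c (u, w) \<noteq> []"

definition trans :: "('v, 's, 'm) alg \<Rightarrow> ('v \<times> 'v) set \<Rightarrow> 'v set \<Rightarrow>
    ('v, 's, 'm) config \<Rightarrow> ('v, 'm) event \<Rightarrow> ('v, 's, 'm) config \<Rightarrow> bool" where
  "trans A E F c ev c' \<longleftrightarrow>
     (case ev of
        Deliver u w \<Rightarrow> enabled A E F c u w \<and>
          (let S = fst c; Q = snd c; m = hd (Q (u, w));
               r = alg_step A w (S w) u m
           in c' = (S(w := fst r), bcast E w (snd r) (Q((u, w) := tl (Q (u, w))))))
      | Byz b m \<Rightarrow> b \<in> F \<and> c' = (fst c, bcast E b [m] (snd c))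
      | Idle \<Rightarrow> c' = c)"

definition initial :: "('v, 's, 'm) alg \<Rightarrow> ('v \<times> 'v) set \<Rightarrow> 'v set \<Rightarrow> ('v \<Rightarrow> real) \<Rightarrow> ('v, 's, 'm) config \<Rightarrow> bool" where
  "initial A E F x c \<longleftrightarrow>
     (\<forall>v. v \<notin> F \<longrightarrow> fst c v = fst (alg_init A v (x v))) \<and>
     snd c = (\<lambda>(u, w). if (u, w) \<in> E \<and> u \<notin> F then snd (alg_init A u (x u)) else [])"

definition fair_exec :: "('v, 's, 'm) alg \<Rightarrow> ('v \<times> 'v) set \<Rightarrow> 'v set \<Rightarrow> ('v \<Rightarrow> real) \<Rightarrow>
    (nat \<Rightarrow> ('v, 's, 'm) config) \<Rightarrow> (nat \<Rightarrow> ('v, 'm) event) \<Rightarrow> bool" where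
  "fair_exec A E F x c ev \<longleftrightarrow>
     initial A E F x (c 0) \<and>
     (\<forall>t. trans A E F (c t) (ev t) (c (Suc t))) \<and>
     (\<forall>t u w. enabled A E F (c t) u w \<longrightarrow>
        (\<exists>t'\<ge>t. ev t' = Deliver u w \<or> \<not> enabled A E F (c t') u w))"

definition solves_approx_consensus ::
    "('v, 's, 'm) alg \<Rightarrow> 'v set \<Rightarrow> ('v \<times> 'v) set \<Rightarrow> nat \<Rightarrow> real \<Rightarrow> real \<Rightarrow> real \<Rightarrow> bool" where
  "solves_approx_consensus A V E f L U \<epsilon> \<longleftrightarrow>
     (\<forall>F x c ev.
        F \<subseteq> V \<and> card F \<le> f \<and> (\<forall>v\<in>V. L \<le> x v \<and> x v \<le> U) \<and> fair_exec A E F x c ev \<longrightarrow>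
          (\<forall>v\<in>V - F. \<forall>w\<in>V - F. \<forall>t t' a b.
              alg_out A (fst (c t) v) = Some a \<and> alg_out A (fst (c t') w) = Some b \<longrightarrow>
              \<bar>a - b\<bar> \<le> \<epsilon>) \<and>
          (\<forall>v\<in>V - F. \<forall>t a. alg_out A (fst (c t) v) = Some a \<longrightarrow>
              a \<in> convex hull (x ` (V - F))) \<and>
          (\<forall>v\<in>V - F. \<exists>t. alg_out A (fst (c t) v) \<noteq> None))"

end

theory Submission
  imports Defs
begin

text \<open>Suppose \<open>|V| \<le> 3f\<close> and split \<open>V\<close> into \<open>P, Q, R\<close> of size at most \<open>f\<close>, with \<open>P, R\<close>
  non-empty. In the execution \<open>C\<close> the nodes of \<open>Q\<close> crash at the start, nodes of \<open>P\<close> have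
  input \<open>L\<close> and all others input \<open>U\<close>; some \<open>p \<in> P\<close> and \<open>r \<in> R\<close> decide.
  Up to any finite time, \<open>p\<close> cannot tell \<open>C\<close> apart from an execution in which \<open>R\<close> is
  Byzantine and replays its behaviour in \<open>C\<close>, while the correct nodes \<open>Q\<close> are merely slow
  and every correct input is \<open>L\<close>; by validity \<open>p\<close> decides \<open>L\<close>. Symmetrically \<open>r\<close> decides
  \<open>U\<close>, contradicting \<open>\<epsilon>\<close>-agreement since \<open>\<epsilon> < U - L\<close>.\<close>

definition next_config :: "('v, 's, 'm) alg \<Rightarrow> ('v \<times> 'v) set \<Rightarrow> ('v, 's, 'm) config \<Rightarrow>
    ('v, 'm) event \<Rightarrow> ('v, 's, 'm) config" where
  "next_config A E c ev = (case ev of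
        Deliver u w \<Rightarrow>
          (let S = fst c; Q = snd c; m = hd (Q (u, w));
               r = alg_step A w (S w) u m
           in (S(w := fst r), bcast E w (snd r) (Q((u, w) := tl (Q (u, w))))))
      | Byz b m \<Rightarrow> (fst c, bcast E b [m] (snd c))
      | Idle \<Rightarrow> c)"

definition legal_event :: "('v, 's, 'm) alg \<Rightarrow> ('v \<times> 'v) set \<Rightarrow> 'v set \<Rightarrow>
    ('v, 's, 'm) config \<Rightarrow> ('v, 'm) event \<Rightarrow> bool" where
  "legal_event A E F c ev =
     (case ev of Deliver u w \<Rightarrow> enabled A E F c u w | Byz b m \<Rightarrow> b \<in> F | Idle \<Rightarrow> True)"

lemma trans_iff_legal_event:
  "Defs.trans A E F c ev c' \<longleftrightarrow> legal_event A E F c ev \<and> c' = next_config A E c ev"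
  by (cases ev) (auto simp: Defs.trans_def next_config_def legal_event_def Let_def)

inductive steps :: "('v, 's, 'm) alg \<Rightarrow> ('v \<times> 'v) set \<Rightarrow> 'v set \<Rightarrow> ('v, 's, 'm) config \<Rightarrow>
    ('v, 'm) event list \<Rightarrow> ('v, 's, 'm) config \<Rightarrow> bool"
  for A E F where
  Nil: "steps A E F c [] c"
| Cons: "Defs.trans A E F c e c' \<Longrightarrow> steps A E F c' es c'' \<Longrightarrow> steps A E F c (e # es) c''"

lemma steps_append:
  "steps A E F c es c' \<Longrightarrow> steps A E F c' es' c'' \<Longrightarrow> steps A E F c (es @ es') c''"
  by (induction rule: steps.induct) (auto intro: steps.intros)

lemma steps_single: "Defs.trans A E F c e c' \<Longrightarrow> steps A E F c [e] c'"
  by (auto intro: steps.intros)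

lemma steps_Byz_broadcast:
  assumes "b \<in> F"
  shows "steps A E F c (map (Byz b) ms) (fst c, bcast E b ms (snd c))"
proof (induction ms arbitrary: c)
  case Nil
  have "(fst c, bcast E b [] (snd c)) = c" by (cases c) (simp add: bcast_def fun_eq_iff)
  then show ?case by (simp add: steps.Nil)
next
  case (Cons m ms)
  have "Defs.trans A E F c (Byz b m) (fst c, bcast E b [m] (snd c))"
    using assms by (simp add: Defs.trans_def)
  moreover have "bcast E b ms (bcast E b [m] (snd c)) = bcast E b (m # ms) (snd c)"
    by (auto simp: bcast_def)
  ultimately show ?case
    using Cons.IH[of "(fst c, bcast E b [m] (snd c))"] by (auto intro: steps.Cons)
qed

lemma steps_Byz_broadcasts:
  assumes "distinct bs" "set bs \<subseteq> F"
  shows "steps A E F c (concat (map (\<lambda>b. map (Byz b) (g b)) bs))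
           (fst c, \<lambda>e. if fst e \<in> set bs \<and> e \<in> E then snd c e @ g (fst e) else snd c e)"
  using assms
proof (induction bs arbitrary: c)
  case Nil
  then show ?case by (simp add: steps.Nil)
next
  case (Cons b bs)
  let ?c = "(fst c, bcast E b (g b) (snd c))"
  have "steps A E F c (map (Byz b) (g b)) ?c"
    using Cons.prems by (intro steps_Byz_broadcast) auto
  moreover have "steps A E F ?c (concat (map (\<lambda>b. map (Byz b) (g b)) bs))
     (fst c, \<lambda>e. if fst e \<in> set bs \<and> e \<in> E then snd ?c e @ g (fst e) else snd ?c e)"
    using Cons.IH[of ?c] Cons.prems by simp
  moreover have "(\<lambda>e. if fst e \<in> set bs \<and> e \<in> E then snd ?c e @ g (fst e) else snd ?c e)
      = (\<lambda>e. if fst e \<in> set (b # bs) \<and> e \<in> E then snd c e @ g (fst e) else snd c e)"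
    using Cons.prems by (auto simp: bcast_def fun_eq_iff)
  ultimately show ?case using steps_append by fastforce
qed

definition init_config :: "('v, 's, 'm) alg \<Rightarrow> ('v \<times> 'v) set \<Rightarrow> 'v set \<Rightarrow> ('v \<Rightarrow> real) \<Rightarrow>
    ('v, 's, 'm) config" where
  "init_config A E F x = (\<lambda>v. fst (alg_init A v (x v)),
     \<lambda>(u, w). if (u, w) \<in> E \<and> u \<notin> F then snd (alg_init A u (x u)) else [])"

lemma initial_init_config: "initial A E F x (init_config A E F x)"
  by (simp add: initial_def init_config_def)

subsection \<open>Extending a finite execution to a fair one\<close>

definition round_robin :: "('v \<times> 'v) list \<Rightarrow> ('v, 's, 'm) alg \<Rightarrow> ('v \<times> 'v) set \<Rightarrow> 'v set \<Rightarrow>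
    ('v, 's, 'm) config \<Rightarrow> nat \<Rightarrow> ('v, 'm) event" where
  "round_robin el A E F c t =
     (let (u, w) = el ! (t mod length el)
      in if el \<noteq> [] \<and> enabled A E F c u w then Deliver u w else Idle)"

primrec extended_run :: "('v \<times> 'v) list \<Rightarrow> ('v, 's, 'm) alg \<Rightarrow> ('v \<times> 'v) set \<Rightarrow> 'v set \<Rightarrow>
    ('v, 's, 'm) config \<Rightarrow> ('v, 'm) event list \<Rightarrow> nat \<Rightarrow> ('v, 's, 'm) config" where
  "extended_run el A E F c0 es 0 = c0"
| "extended_run el A E F c0 es (Suc t) =
     next_config A E (extended_run el A E F c0 es t)
       (if t < length es then es ! t else round_robin el A E F (extended_run el A E F c0 es t) t)"

definition extended_events :: "('v \<times> 'v) list \<Rightarrow> ('v, 's, 'm) alg \<Rightarrow> ('v \<times> 'v) set \<Rightarrow> 'v set \<Rightarrow>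
    ('v, 's, 'm) config \<Rightarrow> ('v, 'm) event list \<Rightarrow> nat \<Rightarrow> ('v, 'm) event" where
  "extended_events el A E F c0 es t =
     (if t < length es then es ! t else round_robin el A E F (extended_run el A E F c0 es t) t)"

lemma steps_from_extended_run:
  assumes "steps A E F c0 es c1" "t \<le> length es"
  shows "steps A E F (extended_run el A E F c0 es t) (drop t es) c1"
  using assms(2)
proof (induction t)
  case 0
  then show ?case using assms(1) by simp
next
  case (Suc t)
  then have "steps A E F (extended_run el A E F c0 es t) (es ! t # drop (Suc t) es) c1"
    by (simp add: Cons_nth_drop_Suc)
  then obtain c' where "Defs.trans A E F (extended_run el A E F c0 es t) (es ! t) c'"
    and "steps A E F c' (drop (Suc t) es) c1"
    by (cases rule: steps.cases) auto
  with Suc.prems show ?case by (simp add: trans_iff_legal_event)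
qed

lemma extended_run_trans:
  assumes "steps A E F c0 es c1"
  shows "Defs.trans A E F (extended_run el A E F c0 es t) (extended_events el A E F c0 es t)
           (extended_run el A E F c0 es (Suc t))"
proof (cases "t < length es")
  case True
  then have "steps A E F (extended_run el A E F c0 es t) (es ! t # drop (Suc t) es) c1"
    using steps_from_extended_run[OF assms, of t el] by (simp add: Cons_nth_drop_Suc)
  then have "legal_event A E F (extended_run el A E F c0 es t) (es ! t)"
    by (cases rule: steps.cases) (auto simp: trans_iff_legal_event)
  with True show ?thesis by (simp add: trans_iff_legal_event extended_events_def)
next
  case False
  then show ?thesis
    by (simp add: trans_iff_legal_event extended_events_def round_robin_def legal_event_def
        split: prod.split)
qed

lemma round_robin_fair:
  assumes "(u, w) \<in> set el"
  obtains t' where "t' \<ge> t"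
    "round_robin el A E F (c t') t' = Deliver u w \<or> \<not> enabled A E F (c t') u w"
proof -
  obtain i where i: "i < length el" "el ! i = (u, w)" using assms by (metis in_set_conv_nth)
  define t' where "t' = t * length el + i"
  have "t \<le> t * length el" using i by simp
  also have "\<dots> \<le> t'" by (simp add: t'_def)
  finally have "t \<le> t'" .
  moreover have "t' mod length el = i" "el \<noteq> []" using i by (auto simp: t'_def)
  ultimately show ?thesis using i by (intro that[of t']) (simp_all add: round_robin_def)
qed

lemma fair_exec_extension:
  assumes "finite E" "initial A E F x c0" "steps A E F c0 es c1"
  obtains c ev where "fair_exec A E F x c ev" "c (length es) = c1"
    "\<forall>t\<ge>length es. \<forall>b m. ev t \<noteq> Byz b m"
proof -
  obtain el where el: "set el = E" using finite_list[OF assms(1)] by blast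
  let ?c = "extended_run el A E F c0 es" and ?ev = "extended_events el A E F c0 es"
  have "\<exists>t'\<ge>t. ?ev t' = Deliver u w \<or> \<not> enabled A E F (?c t') u w"
    if "enabled A E F (?c t) u w" for t u w
  proof -
    have "(u, w) \<in> set el" using that el by (simp add: enabled_def)
    then obtain t' where "t' \<ge> t + length es"
      "round_robin el A E F (?c t') t' = Deliver u w \<or> \<not> enabled A E F (?c t') u w"
      by (rule round_robin_fair)
    then show ?thesis by (intro exI[of _ t']) (auto simp: extended_events_def)
  qed
  then have "fair_exec A E F x ?c ?ev"
    using assms(2) extended_run_trans[OF assms(3)] by (simp add: fair_exec_def)
  moreover have "?c (length es) = c1"
    using steps_from_extended_run[OF assms(3), of "length es" el] by (auto elim: steps.cases)
  moreover have "\<forall>t\<ge>length es. \<forall>b m. ?ev t \<noteq> Byz b m"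
    by (simp add: extended_events_def round_robin_def split: prod.split)
  ultimately show ?thesis using that by blast
qed

lemma Byz_free_fair_exec:
  assumes "finite E"
  obtains c ev where "fair_exec A E F x c ev" "\<forall>t b m. ev t \<noteq> Byz b m"
proof -
  obtain c ev where "fair_exec A E F x c ev" "\<forall>t\<ge>0. \<forall>b m. ev t \<noteq> Byz b m"
    using fair_exec_extension[OF assms initial_init_config steps.Nil] by (metis list.size(3))
  with that show ?thesis by simp
qed

subsection \<open>Simulating a crash execution by a Byzantine one\<close>

text \<open>A configuration \<open>cB\<close> of an execution with Byzantine set \<open>M\<close> matches a configuration
  \<open>cC\<close> of an execution in which \<open>Q\<close> has crashed: the observers \<open>Ob\<close> have the same states
  and the same incoming messages from \<open>Ob \<union> M\<close>, and \<open>Q\<close> has sent nothing.\<close>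

definition crash_sim :: "'v set \<Rightarrow> 'v set \<Rightarrow> 'v set \<Rightarrow>
    ('v, 's, 'm) config \<Rightarrow> ('v, 's, 'm) config \<Rightarrow> bool" where
  "crash_sim Q M Ob cC cB \<longleftrightarrow>
     (\<forall>v\<in>Ob. fst cB v = fst cC v) \<and>
     (\<forall>u w. u \<in> Ob \<union> M \<longrightarrow> w \<in> Ob \<longrightarrow> snd cB (u, w) = snd cC (u, w)) \<and>
     (\<forall>q w. q \<in> Q \<longrightarrow> snd cC (q, w) = [])"

lemma crash_sim_init:
  assumes "initial A E Q x cC" "\<forall>v\<in>Ob. y v = x v" "Ob \<inter> Q = {}" "M \<inter> Q = {}" "finite M"
  obtains es cB where "steps A E M (init_config A E M y) es cB" "crash_sim Q M Ob cC cB"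
proof -
  obtain bs where bs: "distinct bs" "set bs = M" using finite_distinct_list[OF assms(5)] by blast
  let ?g = "\<lambda>b. snd (alg_init A b (x b))" and ?cB0 = "init_config A E M y"
  \<comment> \<open>The Byzantine nodes broadcast the initial messages they send in the crash execution.\<close>
  have "steps A E M ?cB0 (concat (map (\<lambda>b. map (Byz b) (?g b)) bs))
           (fst ?cB0, \<lambda>e. if fst e \<in> set bs \<and> e \<in> E then snd ?cB0 e @ ?g (fst e) else snd ?cB0 e)"
    using bs by (intro steps_Byz_broadcasts) auto
  moreover have "crash_sim Q M Ob cC
     (fst ?cB0, \<lambda>e. if fst e \<in> set bs \<and> e \<in> E then snd ?cB0 e @ ?g (fst e) else snd ?cB0 e)"
    using assms bs unfolding crash_sim_def initial_def init_config_def by auto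
  ultimately show ?thesis using that by blast
qed

lemma crash_sim_Deliver:
  assumes E: "E \<subseteq> V \<times> V" and cover: "V \<subseteq> Ob \<union> Q \<union> M" and disj: "Ob \<inter> M = {}"
    and sim: "crash_sim Q M Ob cC cB" and en: "enabled A E Q cC u w"
  obtains es cB' where "steps A E M cB es cB'"
    "crash_sim Q M Ob (next_config A E cC (Deliver u w)) cB'"
proof -
  have "w \<notin> Q" "u \<notin> Q" "(u, w) \<in> E"
    using en sim by (auto simp: enabled_def crash_sim_def)
  then have u: "u \<in> Ob \<union> M" and w: "w \<in> Ob \<union> M" using E cover by auto
  define r where "r = alg_step A w (fst cC w) u (hd (snd cC (u, w)))"
  have cC': "next_config A E cC (Deliver u w) = ((fst cC)(w := fst r),
      bcast E w (snd r) ((snd cC)((u, w) := tl (snd cC (u, w)))))"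
    by (simp add: next_config_def r_def Let_def)
  show ?thesis
  proof (cases "w \<in> M")
    case True
    \<comment> \<open>\<open>w\<close> is Byzantine in \<open>cB\<close> and broadcasts what it sends in the crash execution.\<close>
    have "steps A E M cB (map (Byz w) (snd r)) (fst cB, bcast E w (snd r) (snd cB))"
      using True by (rule steps_Byz_broadcast)
    moreover have "crash_sim Q M Ob (next_config A E cC (Deliver u w))
        (fst cB, bcast E w (snd r) (snd cB))"
      using sim True disj \<open>w \<notin> Q\<close> \<open>u \<notin> Q\<close>
      unfolding cC' crash_sim_def by (auto simp: bcast_def)
    ultimately show ?thesis by (rule that)
  next
    case False
    with w have "w \<in> Ob" by blast
    then have same: "fst cB w = fst cC w" "snd cB (u, w) = snd cC (u, w)"
      using sim u by (auto simp: crash_sim_def)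
    then have "Defs.trans A E M cB (Deliver u w) (next_config A E cB (Deliver u w))"
      using en False by (simp add: trans_iff_legal_event legal_event_def enabled_def)
    moreover have "crash_sim Q M Ob (next_config A E cC (Deliver u w))
        (next_config A E cB (Deliver u w))"
      using sim same \<open>w \<notin> Q\<close> \<open>u \<notin> Q\<close>
      unfolding cC' crash_sim_def by (auto simp: next_config_def r_def bcast_def Let_def)
    ultimately show ?thesis using that steps_single by metis
  qed
qed

lemma crash_sim_step:
  assumes "E \<subseteq> V \<times> V" "V \<subseteq> Ob \<union> Q \<union> M" "Ob \<inter> M = {}"
    and sim: "crash_sim Q M Ob cC cB" and tr: "Defs.trans A E Q cC e cC'"
    and not_Byz: "\<forall>b m. e \<noteq> Byz b m"
  obtains es cB' where "steps A E M cB es cB'" "crash_sim Q M Ob cC' cB'"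
proof (cases e)
  case Idle
  with tr have "cC' = cC" by (simp add: Defs.trans_def)
  with sim show ?thesis using that[OF steps.Nil] by simp
next
  case (Byz b m)
  with not_Byz show ?thesis by blast
next
  case (Deliver u w)
  with tr have "enabled A E Q cC u w" "cC' = next_config A E cC (Deliver u w)"
    by (simp_all add: trans_iff_legal_event legal_event_def)
  with crash_sim_Deliver[OF assms(1-3) sim] that show ?thesis by metis
qed

lemma crash_exec_indistinguishable:
  assumes "finite E" "E \<subseteq> V \<times> V" "V \<subseteq> Ob \<union> Q \<union> M"
    and "Ob \<inter> M = {}" "Ob \<inter> Q = {}" "M \<inter> Q = {}" "finite M"
    and fe: "fair_exec A E Q x c ev" and not_Byz: "\<forall>t b m. ev t \<noteq> Byz b m"
    and "\<forall>v\<in>Ob. y v = x v"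
  obtains c' ev' t' where "fair_exec A E M y c' ev'" "\<forall>v\<in>Ob. fst (c' t') v = fst (c T) v"
proof -
  have "\<exists>es cB. steps A E M (init_config A E M y) es cB \<and> crash_sim Q M Ob (c t) cB" for t
  proof (induction t)
    case 0
    have "initial A E Q x (c 0)" using fe by (simp add: fair_exec_def)
    then show ?case using crash_sim_init[OF _ assms(10,5,6,7)] by blast
  next
    case (Suc t)
    then obtain es cB where st: "steps A E M (init_config A E M y) es cB"
      and sim: "crash_sim Q M Ob (c t) cB" by blast
    have "Defs.trans A E Q (c t) (ev t) (c (Suc t))" using fe by (simp add: fair_exec_def)
    moreover have "\<forall>b m. ev t \<noteq> Byz b m" using not_Byz by blast
    ultimately obtain es' cB' where "steps A E M cB es' cB'" "crash_sim Q M Ob (c (Suc t)) cB'"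
      by (rule crash_sim_step[OF assms(2-4) sim])
    then show ?case using steps_append[OF st] by blast
  qed
  then obtain es cB where st: "steps A E M (init_config A E M y) es cB"
    and sim: "crash_sim Q M Ob (c T) cB" by blast
  obtain c' ev' where "fair_exec A E M y c' ev'" "c' (length es) = cB"
    using fair_exec_extension[OF assms(1) initial_init_config st] by blast
  moreover have "\<forall>v\<in>Ob. fst cB v = fst (c T) v" using sim by (simp add: crash_sim_def)
  ultimately show ?thesis by (intro that[of c' ev' "length es"]) simp_all
qed

lemma solves_approx_consensusD:
  assumes "solves_approx_consensus A V E f L U \<epsilon>" "fair_exec A E F x c ev"
    "F \<subseteq> V" "card F \<le> f" "\<forall>v\<in>V. L \<le> x v \<and> x v \<le> U"
  shows "\<And>v w t t' a b. v \<in> V - F \<Longrightarrow> w \<in> V - F \<Longrightarrow>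
           alg_out A (fst (c t) v) = Some a \<Longrightarrow> alg_out A (fst (c t') w) = Some b \<Longrightarrow>
           \<bar>a - b\<bar> \<le> \<epsilon>"
    and "\<And>v t a. v \<in> V - F \<Longrightarrow> alg_out A (fst (c t) v) = Some a \<Longrightarrow>
           a \<in> convex hull (x ` (V - F))"
    and "\<And>v. v \<in> V - F \<Longrightarrow> \<exists>t. alg_out A (fst (c t) v) \<noteq> None"
proof -
  note props = assms(1)[unfolded solves_approx_consensus_def, rule_format,
      OF conjI[OF assms(3) conjI[OF assms(4) conjI[OF assms(5) assms(2)]]]]
  show "\<And>v w t t' a b. v \<in> V - F \<Longrightarrow> w \<in> V - F \<Longrightarrow>
           alg_out A (fst (c t) v) = Some a \<Longrightarrow> alg_out A (fst (c t') w) = Some b \<Longrightarrow>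
           \<bar>a - b\<bar> \<le> \<epsilon>"
    using props by blast
  show "\<And>v t a. v \<in> V - F \<Longrightarrow> alg_out A (fst (c t) v) = Some a \<Longrightarrow>
           a \<in> convex hull (x ` (V - F))"
    using props by blast
  show "\<And>v. v \<in> V - F \<Longrightarrow> \<exists>t. alg_out A (fst (c t) v) \<noteq> None"
    using props by blast
qed

text \<open>The same decision is taken in an execution where \<open>M\<close> is Byzantine and every correct
  node has input \<open>a\<close>.\<close>

lemma crash_decision_forced:
  assumes sol: "solves_approx_consensus A V E f L U \<epsilon>"
    and "finite V" "E \<subseteq> V \<times> V" "V \<subseteq> Ob \<union> Q \<union> M"
    and "Ob \<inter> M = {}" "Ob \<inter> Q = {}" "M \<inter> Q = {}" "M \<subseteq> V" "card M \<le> f"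
    and "fair_exec A E Q x c ev" "\<forall>t b m. ev t \<noteq> Byz b m"
    and "\<forall>v\<in>Ob. x v = a" "L \<le> a" "a \<le> U"
    and v: "v \<in> Ob" "v \<in> V" and out: "alg_out A (fst (c T) v) = Some d"
  shows "d = a"
proof -
  have "finite E" using assms(3) by (rule finite_subset) (simp add: assms(2))
  moreover have "finite M" using assms(8,2) by (rule finite_subset)
  moreover have "\<forall>v\<in>Ob. (\<lambda>_. a) v = x v" using assms(12) by simp
  ultimately obtain c' ev' t' where fe: "fair_exec A E M (\<lambda>_. a) c' ev'"
    and same: "\<forall>v\<in>Ob. fst (c' t') v = fst (c T) v"
    by (rule crash_exec_indistinguishable[OF _ assms(3-7) _ assms(10,11)])
  have "v \<in> V - M" using v assms(5) by blast
  moreover have "alg_out A (fst (c' t') v) = Some d" using same v out by simp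
  ultimately have "d \<in> convex hull ((\<lambda>_. a) ` (V - M))"
    using solves_approx_consensusD(2)[OF sol fe assms(8,9)] assms(13,14) by simp
  also have "\<dots> \<subseteq> {a}" by (intro hull_minimal) auto
  finally show ?thesis by simp
qed

lemma three_small_parts:
  assumes "finite V" "0 < f" "f < card V" "card V \<le> 3 * f"
  obtains P R where "P \<subseteq> V" "R \<subseteq> V" "P \<inter> R = {}" "P \<noteq> {}" "R \<noteq> {}"
    "card P \<le> f" "card R \<le> f" "card (V - P - R) \<le> f"
proof -
  obtain P where P: "P \<subseteq> V" "card P = f"
    using obtain_subset_with_card_n assms(3) by (metis less_imp_le)
  have "card (V - P) = card V - f" using P assms(1) by (simp add: card_Diff_subset finite_subset)
  then obtain R where R: "R \<subseteq> V - P" "card R = min f (card V - f)"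
    using obtain_subset_with_card_n by (metis min.cobounded2)
  have "card (V - P - R) = card V - f - min f (card V - f)"
    using R \<open>card (V - P) = card V - f\<close> assms(1) by (simp add: card_Diff_subset finite_subset)
  also have "\<dots> \<le> f" using assms(4) by linarith
  finally have "card (V - P - R) \<le> f" .
  moreover have "P \<noteq> {}" "R \<noteq> {}" using P R assms(2,3) by auto
  ultimately show ?thesis using that[of P R] P R by auto
qed

theorem theorem1:
  fixes V :: "'v set" and E :: "('v \<times> 'v) set" and f :: nat
    and L U \<epsilon> :: real and A :: "('v, 's, 'm) alg"
  assumes "finite V"
    and "E \<subseteq> V \<times> V" and "sym E" and "\<forall>v. (v, v) \<notin> E"
    and "0 < f" and "f < card V"
    and "L < U" and "0 < \<epsilon>" and "\<epsilon> < U - L"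
    and "solves_approx_consensus A V E f L U \<epsilon>"
  shows "card V \<ge> 3 * f + 1"
proof (rule ccontr)
  assume "\<not> card V \<ge> 3 * f + 1"
  then obtain P R where PR: "P \<subseteq> V" "R \<subseteq> V" "P \<inter> R = {}" "P \<noteq> {}" "R \<noteq> {}"
    "card P \<le> f" "card R \<le> f" "card (V - P - R) \<le> f"
    using three_small_parts[OF assms(1,5,6)] by (metis not_less_eq_eq Suc_eq_plus1)
  define Q where "Q = V - P - R"
  define x where "x = (\<lambda>v. if v \<in> P then L else U)"
  have parts: "V \<subseteq> P \<union> Q \<union> R" "V \<subseteq> R \<union> Q \<union> P" "P \<inter> Q = {}" "R \<inter> Q = {}"
    "R \<inter> P = {}" "Q \<subseteq> V" "card Q \<le> f"
    using PR by (auto simp: Q_def)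
  have inputs: "\<forall>v\<in>V. L \<le> x v \<and> x v \<le> U" using assms(7) by (simp add: x_def)
  have x_P: "\<forall>v\<in>P. x v = L" and x_R: "\<forall>v\<in>R. x v = U" using PR(3) by (auto simp: x_def)
  have "finite E" using assms(1,2) by (simp add: finite_subset)
  then obtain c ev where fe: "fair_exec A E Q x c ev" and not_Byz: "\<forall>t b m. ev t \<noteq> Byz b m"
    by (rule Byz_free_fair_exec)
  note consensus = solves_approx_consensusD[OF assms(10) fe parts(6,7) inputs]
  obtain p r where "p \<in> P" "r \<in> R" using PR by blast
  then have "p \<in> V - Q" "r \<in> V - Q" using PR parts by auto
  then obtain dp dr tp tr where dp: "alg_out A (fst (c tp) p) = Some dp"
    and dr: "alg_out A (fst (c tr) r) = Some dr"
    using consensus(3) by blast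
  have "dp = L"
    using crash_decision_forced[where a = L, OF assms(10,1,2) parts(1) PR(3) parts(3,4) PR(2,7)
        fe not_Byz x_P _ _ \<open>p \<in> P\<close> _ dp] \<open>p \<in> P\<close> PR(1) assms(7) by auto
  moreover have "dr = U"
    using crash_decision_forced[where a = U, OF assms(10,1,2) parts(2,5,4,3) PR(1,6)
        fe not_Byz x_R _ _ \<open>r \<in> R\<close> _ dr] \<open>r \<in> R\<close> PR(2) assms(7) by auto
  moreover have "\<bar>dp - dr\<bar> \<le> \<epsilon>"
    using consensus(1)[OF \<open>p \<in> V - Q\<close> \<open>r \<in> V - Q\<close> dp dr] .
  ultimately show False using assms(9) by simp
qed

end
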